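(* Let $\mathcal B$ be a weak $\mathfrak b$-scale, $s\in\omega^{<\omega}$ and $f\in\mathcal B$. (1) If $s\in U(f)$, then $s^\frown\triangle_{f(s)}\subseteq U(f)$, where $s^\frown F=\{s^\frown z: z\in F\}$. (2) The set $\{g\in\mathcal B: s\in U(g)\}$ is cofinal in $(\mathcal B,\le^* )$.
   Context: For $m\in\omega$ let $\triangle_m=m^{\le m}$ (finite sequences of length at most $m$ with entries $<m$). A function $f:\omega^{<\omega}\to\omega$ is increasing if $f(s)<f(t)$ whenever $s$ is a proper initial segment of $t$, and $f(s^\frown n)<f(s^\frown m)$ whenever $n<m$. For $f,g:\omega^{<\omega}\to\omega$, $f\le^* g$ means $f(s)\le g(s)$ for all but finitely many $s$. A family $\mathcal B$ of functions $\omega^{<\omega}\to\omega$ is a weak $\mathfrak b$-scale if (a) every member is increasing, (b) there is no $g$ with $f\le^* g$ for all $f\in\mathcal B$, (c) $\mathcal B$ is well-ordered by $\le^*$, (d) for every $n\in\omega$ the set $\{f\in\mathcal B: n<f(\emptyset)\}$ is cofinal in $(\mathcal B,\le^* )$. For $f:\omega^{<\omega}\to\omega$, $U(f)\subseteq\omega^{<\omega}$ is the tree defined by: $\emptyset\in U(f)$, and for $s\in U(f)$, $s^\frown k\in U(f)$ iff $k\ne f(s)$. *)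

theory Defs
  imports Main "HOL-Library.Sublist"
begin

(* omega^{<omega} is rendered as nat list; s^t is s @ t. *)

definition triangle :: "nat \<Rightarrow> nat list set" where
  "triangle m = {z. length z \<le> m \<and> (\<forall>x\<in>set z. x < m)}"

definition increasing :: "(nat list \<Rightarrow> nat) \<Rightarrow> bool" where
  "increasing f \<longleftrightarrow>
     (\<forall>s t. strict_prefix s t \<longrightarrow> f s < f t) \<and>
     (\<forall>s n m. n < m \<longrightarrow> f (s @ [n]) < f (s @ [m]))"

definition le_star :: "(nat list \<Rightarrow> nat) \<Rightarrow> (nat list \<Rightarrow> nat) \<Rightarrow> bool" where
  "le_star f g \<longleftrightarrow> finite {s. \<not> f s \<le> g s}"

definition le_star_rel :: "(nat list \<Rightarrow> nat) set \<Rightarrow> ((nat list \<Rightarrow> nat) \<times> (nat list \<Rightarrow> nat)) set" where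
  "le_star_rel B = {(f, g). f \<in> B \<and> g \<in> B \<and> le_star f g}"

definition cofinal_in :: "(nat list \<Rightarrow> nat) set \<Rightarrow> (nat list \<Rightarrow> nat) set \<Rightarrow> bool" where
  "cofinal_in C B \<longleftrightarrow> C \<subseteq> B \<and> (\<forall>f\<in>B. \<exists>g\<in>C. le_star f g)"

definition weak_b_scale :: "(nat list \<Rightarrow> nat) set \<Rightarrow> bool" where
  "weak_b_scale B \<longleftrightarrow>
     (\<forall>f\<in>B. increasing f) \<and>
     \<not> (\<exists>g. \<forall>f\<in>B. le_star f g) \<and>
     well_order_on B (le_star_rel B) \<and>
     (\<forall>n. cofinal_in {f\<in>B. n < f []} B)"

inductive_set U :: "(nat list \<Rightarrow> nat) \<Rightarrow> nat list set" for f where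
  U_Nil: "[] \<in> U f"
| U_snoc: "s \<in> U f \<Longrightarrow> k \<noteq> f s \<Longrightarrow> s @ [k] \<in> U f"

end

theory Submission
  imports Defs
begin

(* Along a branch an increasing f only grows, so once every entry appended to s is below f s,
   none of them can hit the single excluded value f t at a node t extending s. Part (2) applies
   this with s = [] to the members g with g [] above every entry of s, which are cofinal by
   clause (d) of a weak b-scale. *)

lemma increasing_prefix_mono:
  assumes "increasing f" and "prefix s t"
  shows "f s \<le> f t"
proof (cases "s = t")
  case False
  with assms(2) have "strict_prefix s t" by (simp add: strict_prefix_def)
  with assms(1) show ?thesis unfolding increasing_def by (simp add: less_imp_le)
qed simp

lemma append_in_U:
  assumes "increasing f" and "s \<in> U f" and "\<forall>x\<in>set z. x < f s"
  shows "s @ z \<in> U f"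
  using assms(3)
proof (induction z rule: rev_induct)
  case Nil
  with assms(2) show ?case by simp
next
  case (snoc k z)
  then have "s @ z \<in> U f" by simp
  moreover have "k \<noteq> f (s @ z)"
  proof -
    have "k < f s" using snoc.prems by simp
    also have "f s \<le> f (s @ z)" using increasing_prefix_mono[OF assms(1)] by simp
    finally show ?thesis by simp
  qed
  ultimately show ?case using U.U_snoc by fastforce
qed

lemma image_append_triangle_subset_U:
  assumes "increasing f" and "s \<in> U f"
  shows "(\<lambda>z. s @ z) ` triangle (f s) \<subseteq> U f"
  using append_in_U[OF assms] unfolding triangle_def by blast

lemma in_U_if_set_less_root:
  assumes "increasing f" and "\<forall>x\<in>set s. x < f []"
  shows "s \<in> U f"
  using append_in_U[OF assms(1) U.U_Nil assms(2)] by simp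

lemma cofinal_in_mono:
  assumes "cofinal_in C B" and "C \<subseteq> D" and "D \<subseteq> B"
  shows "cofinal_in D B"
  using assms unfolding cofinal_in_def by blast

theorem lemma22:
  fixes B :: "(nat list \<Rightarrow> nat) set" and s :: "nat list" and f :: "nat list \<Rightarrow> nat"
  assumes "weak_b_scale B" and "f \<in> B"
  shows "(s \<in> U f \<longrightarrow> (\<lambda>z. s @ z) ` triangle (f s) \<subseteq> U f)
         \<and> cofinal_in {g\<in>B. s \<in> U g} B"
proof
  have increasing: "\<And>g. g \<in> B \<Longrightarrow> increasing g"
    using assms(1) unfolding weak_b_scale_def by blast
  show "s \<in> U f \<longrightarrow> (\<lambda>z. s @ z) ` triangle (f s) \<subseteq> U f"
    using image_append_triangle_subset_U[OF increasing[OF assms(2)]] by blast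
  define n where "n = Max (insert 0 (set s))"
  have "cofinal_in {g\<in>B. n < g []} B"
    using assms(1) unfolding weak_b_scale_def by blast
  moreover have "{g\<in>B. n < g []} \<subseteq> {g\<in>B. s \<in> U g}"
  proof (intro subsetI CollectI conjI)
    fix g assume g: "g \<in> {g\<in>B. n < g []}"
    have "\<forall>x\<in>set s. x < g []"
      using g unfolding n_def by (auto simp: le_less_trans)
    with g show "g \<in> B" and "s \<in> U g" using in_U_if_set_less_root increasing by auto
  qed
  ultimately show "cofinal_in {g\<in>B. s \<in> U g} B"
    by (rule cofinal_in_mono) blast
qed

end
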